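(* On bipartite graphs, each of GVC, GVC1 and GVC2 is equivalent to the bipartite unconstrained 0-1 quadratic programming problem BQP01: every instance of one can be formulated as an instance of the other such that an optimal solution of the new instance yields an optimal solution of the original (identifying $U_1\subseteq V_1$, $U_2\subseteq V_2$ with incidence vectors $x\in\{0,1\}^m$, $y\in\{0,1\}^n$).
   Context: Let $G=(V_1,V_2,E)$ be a bipartite graph with $V_1=\{1,\dots,m\}$, $V_2=\{1,\dots,n\}$ and every edge $(i,j)$ having $i\in V_1$, $j\in V_2$. Vertices $i\in V_1$ have weights $c_i$, vertices $j\in V_2$ have weights $d_j$, and each edge has real weights $q^0_{ij},q^1_{ij},q^2_{ij}$. For $U_1\subseteq V_1$, $U_2\subseteq V_2$ let $E_0(U_1,U_2)=\{(i,j)\in E: i\notin U_1, j\notin U_2\}$, $E_1(U_1,U_2)$ the edges with exactly one of $i\in U_1$, $j\in U_2$, and $E_2(U_1,U_2)=\{(i,j)\in E: i\in U_1,j\in U_2\}$. GVC on $G$ minimizes $\sum_{i\in U_1}c_i+\sum_{j\in U_2}d_j+\sum_{E_0}q^0_{ij}+\sum_{E_1}q^1_{ij}+\sum_{E_2}q^2_{ij}$ over $U_1\subseteq V_1,U_2\subseteq V_2$; GVC1 is the special case $q^1\equiv q^2\equiv 0$; GVC2 is the special case $q^0\equiv q^1\equiv 0$. BQP01: given a real $m\times n$ matrix $Q=(q_{ij})$, $a\in\mathbb{R}^m$, $b\in\mathbb{R}^n$, minimize $\sum_i a_ix_i+\sum_j b_jy_j+\sum_{i,j}q_{ij}x_iy_j$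 over $x\in\{0,1\}^m$, $y\in\{0,1\}^n$. Two problems are equivalent if each can be formulated as the other so that an optimal solution of the formulated instance gives an optimal solution of the original. *)

theory Defs
  imports Complex_Main
begin

definition bip_graph :: "nat \<Rightarrow> nat \<Rightarrow> (nat \<times> nat) set \<Rightarrow> bool" where
  "bip_graph m n E \<longleftrightarrow> E \<subseteq> {1..m} \<times> {1..n}"

definition E0 :: "(nat \<times> nat) set \<Rightarrow> nat set \<Rightarrow> nat set \<Rightarrow> (nat \<times> nat) set" where
  "E0 E U1 U2 = {(i,j) \<in> E. i \<notin> U1 \<and> j \<notin> U2}"
definition E1 :: "(nat \<times> nat) set \<Rightarrow> nat set \<Rightarrow> nat set \<Rightarrow> (nat \<times> nat) set" where
  "E1 E U1 U2 = {(i,j) \<in> E. (i \<in> U1) \<noteq> (j \<in> U2)}"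
definition E2 :: "(nat \<times> nat) set \<Rightarrow> nat set \<Rightarrow> nat set \<Rightarrow> (nat \<times> nat) set" where
  "E2 E U1 U2 = {(i,j) \<in> E. i \<in> U1 \<and> j \<in> U2}"

definition gvc_obj ::
  "(nat \<times> nat) set \<Rightarrow> (nat \<Rightarrow> real) \<Rightarrow> (nat \<Rightarrow> real) \<Rightarrow>
   (nat \<Rightarrow> nat \<Rightarrow> real) \<Rightarrow> (nat \<Rightarrow> nat \<Rightarrow> real) \<Rightarrow> (nat \<Rightarrow> nat \<Rightarrow> real) \<Rightarrow>
   nat set \<Rightarrow> nat set \<Rightarrow> real" where
  "gvc_obj E c d q0 q1 q2 U1 U2 =
     (\<Sum>i\<in>U1. c i) + (\<Sum>j\<in>U2. d j)
     + (\<Sum>(i,j)\<in>E0 E U1 U2. q0 i j)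
     + (\<Sum>(i,j)\<in>E1 E U1 U2. q1 i j)
     + (\<Sum>(i,j)\<in>E2 E U1 U2. q2 i j)"

definition gvc_opt ::
  "nat \<Rightarrow> nat \<Rightarrow> (nat \<times> nat) set \<Rightarrow> (nat \<Rightarrow> real) \<Rightarrow> (nat \<Rightarrow> real) \<Rightarrow>
   (nat \<Rightarrow> nat \<Rightarrow> real) \<Rightarrow> (nat \<Rightarrow> nat \<Rightarrow> real) \<Rightarrow> (nat \<Rightarrow> nat \<Rightarrow> real) \<Rightarrow>
   nat set \<Rightarrow> nat set \<Rightarrow> bool" where
  "gvc_opt m n E c d q0 q1 q2 U1 U2 \<longleftrightarrow>
     U1 \<subseteq> {1..m} \<and> U2 \<subseteq> {1..n} \<and>
     (\<forall>W1 W2. W1 \<subseteq> {1..m} \<longrightarrow> W2 \<subseteq> {1..n} \<longrightarrow>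
        gvc_obj E c d q0 q1 q2 U1 U2 \<le> gvc_obj E c d q0 q1 q2 W1 W2)"

text \<open>BQP01 objective, feasibility (0-1 vectors indexed by {1..m}, {1..n};
  entries outside the index range are irrelevant) and optimality.\<close>
definition bqp_obj ::
  "nat \<Rightarrow> nat \<Rightarrow> (nat \<Rightarrow> nat \<Rightarrow> real) \<Rightarrow> (nat \<Rightarrow> real) \<Rightarrow> (nat \<Rightarrow> real) \<Rightarrow>
   (nat \<Rightarrow> real) \<Rightarrow> (nat \<Rightarrow> real) \<Rightarrow> real" where
  "bqp_obj m n Q a b x y =
     (\<Sum>i=1..m. a i * x i) + (\<Sum>j=1..n. b j * y j)
     + (\<Sum>i=1..m. \<Sum>j=1..n. Q i j * x i * y j)"

definition bqp_feas :: "nat \<Rightarrow> nat \<Rightarrow> (nat \<Rightarrow> real) \<Rightarrow> (nat \<Rightarrow> real) \<Rightarrow> bool" where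
  "bqp_feas m n x y \<longleftrightarrow> (\<forall>i\<in>{1..m}. x i \<in> {0,1}) \<and> (\<forall>j\<in>{1..n}. y j \<in> {0,1})"

definition bqp_opt ::
  "nat \<Rightarrow> nat \<Rightarrow> (nat \<Rightarrow> nat \<Rightarrow> real) \<Rightarrow> (nat \<Rightarrow> real) \<Rightarrow> (nat \<Rightarrow> real) \<Rightarrow>
   (nat \<Rightarrow> real) \<Rightarrow> (nat \<Rightarrow> real) \<Rightarrow> bool" where
  "bqp_opt m n Q a b x y \<longleftrightarrow> bqp_feas m n x y \<and>
     (\<forall>x' y'. bqp_feas m n x' y' \<longrightarrow> bqp_obj m n Q a b x y \<le> bqp_obj m n Q a b x' y')"

definition incid :: "nat set \<Rightarrow> nat \<Rightarrow> real" where
  "incid U = (\<lambda>i. if i \<in> U then 1 else 0)"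

definition supp01 :: "nat \<Rightarrow> (nat \<Rightarrow> real) \<Rightarrow> nat set" where
  "supp01 k x = {i\<in>{1..k}. x i = 1}"

definition cls_GVC :: "(nat \<Rightarrow> nat \<Rightarrow> real) \<Rightarrow> (nat \<Rightarrow> nat \<Rightarrow> real) \<Rightarrow> (nat \<Rightarrow> nat \<Rightarrow> real) \<Rightarrow> bool" where
  "cls_GVC q0 q1 q2 \<longleftrightarrow> True"
definition cls_GVC1 :: "(nat \<Rightarrow> nat \<Rightarrow> real) \<Rightarrow> (nat \<Rightarrow> nat \<Rightarrow> real) \<Rightarrow> (nat \<Rightarrow> nat \<Rightarrow> real) \<Rightarrow> bool" where
  "cls_GVC1 q0 q1 q2 \<longleftrightarrow> q1 = (\<lambda>i j. 0) \<and> q2 = (\<lambda>i j. 0)"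
definition cls_GVC2 :: "(nat \<Rightarrow> nat \<Rightarrow> real) \<Rightarrow> (nat \<Rightarrow> nat \<Rightarrow> real) \<Rightarrow> (nat \<Rightarrow> nat \<Rightarrow> real) \<Rightarrow> bool" where
  "cls_GVC2 q0 q1 q2 \<longleftrightarrow> q0 = (\<lambda>i j. 0) \<and> q1 = (\<lambda>i j. 0)"

definition gvc_formulated_as_bqp ::
  "nat \<Rightarrow> nat \<Rightarrow> (nat \<times> nat) set \<Rightarrow> (nat \<Rightarrow> real) \<Rightarrow> (nat \<Rightarrow> real) \<Rightarrow>
   (nat \<Rightarrow> nat \<Rightarrow> real) \<Rightarrow> (nat \<Rightarrow> nat \<Rightarrow> real) \<Rightarrow> (nat \<Rightarrow> nat \<Rightarrow> real) \<Rightarrow> bool" where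
  "gvc_formulated_as_bqp m n E c d q0 q1 q2 \<longleftrightarrow>
     (\<exists>Q a b K.
        (\<forall>U1 U2. U1 \<subseteq> {1..m} \<longrightarrow> U2 \<subseteq> {1..n} \<longrightarrow>
           gvc_obj E c d q0 q1 q2 U1 U2 = bqp_obj m n Q a b (incid U1) (incid U2) + K) \<and>
        (\<forall>U1 U2. U1 \<subseteq> {1..m} \<longrightarrow> U2 \<subseteq> {1..n} \<longrightarrow>
           bqp_opt m n Q a b (incid U1) (incid U2) \<longrightarrow> gvc_opt m n E c d q0 q1 q2 U1 U2))"

definition bqp_formulated_as_gvc ::
  "((nat \<Rightarrow> nat \<Rightarrow> real) \<Rightarrow> (nat \<Rightarrow> nat \<Rightarrow> real) \<Rightarrow> (nat \<Rightarrow> nat \<Rightarrow> real) \<Rightarrow> bool) \<Rightarrow>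
   nat \<Rightarrow> nat \<Rightarrow> (nat \<Rightarrow> nat \<Rightarrow> real) \<Rightarrow> (nat \<Rightarrow> real) \<Rightarrow> (nat \<Rightarrow> real) \<Rightarrow> bool" where
  "bqp_formulated_as_gvc cls m n Q a b \<longleftrightarrow>
     (\<exists>E c d q0 q1 q2 K. bip_graph m n E \<and> cls q0 q1 q2 \<and>
        (\<forall>x y. bqp_feas m n x y \<longrightarrow>
           bqp_obj m n Q a b x y = gvc_obj E c d q0 q1 q2 (supp01 m x) (supp01 n y) + K) \<and>
        (\<forall>U1 U2. gvc_opt m n E c d q0 q1 q2 U1 U2 \<longrightarrow>
           bqp_opt m n Q a b (incid U1) (incid U2)))"

definition equiv_bqp ::
  "((nat \<Rightarrow> nat \<Rightarrow> real) \<Rightarrow> (nat \<Rightarrow> nat \<Rightarrow> real) \<Rightarrow> (nat \<Rightarrow> nat \<Rightarrow> real) \<Rightarrow> bool) \<Rightarrow> bool" where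
  "equiv_bqp cls \<longleftrightarrow>
     (\<forall>m n E c d q0 q1 q2. bip_graph m n E \<longrightarrow> cls q0 q1 q2 \<longrightarrow>
         gvc_formulated_as_bqp m n E c d q0 q1 q2) \<and>
     (\<forall>m n Q a b. bqp_formulated_as_gvc cls m n Q a b)"

end

theory Submission
  imports Defs
begin

(* For the incidence vectors x, y of U1, U2 the edge classes have polynomial indicators:
   an edge (i,j) lies in E0, E1, E2 iff (1 - x i) (1 - y j), x i + y j - 2 x i y j, x i y j is 1.
   So a GVC objective is a bilinear function of (x, y), i.e. a BQP01 objective plus a constant.
   Conversely, a BQP01 instance is the GVC2 instance on the complete bipartite graph with q2 = Q,
   and, since x i y j = (1 - x i) (1 - y j) - 1 + x i + y j, also a GVC1 instance with q0 = Q.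
   Objectives differing by a constant have the same optimal solutions. *)

lemma sum_pairs_filter:
  "finite E \<Longrightarrow> (\<Sum>(i,j)\<in>{(i,j)\<in>E. P i j}. f i j) = (\<Sum>(i,j)\<in>E. if P i j then f i j else 0)"
  by (simp add: sum.inter_filter[symmetric] split_def case_prod_beta')

lemma sum_pairs_eq_double_sum:
  assumes "E \<subseteq> A \<times> B" "finite A" "finite B"
  shows "(\<Sum>(i,j)\<in>E. f i j) = (\<Sum>i\<in>A. \<Sum>j\<in>B. if (i,j) \<in> E then f i j else 0)"
proof -
  have "(\<Sum>(i,j)\<in>E. f i j) = (\<Sum>(i,j)\<in>A \<times> B. if (i,j) \<in> E then f i j else 0)"
    using assms by (intro sum.mono_neutral_cong_left) auto
  then show ?thesis
    by (simp add: sum.cartesian_product)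
qed

lemma sum_eq_sum_incid:
  assumes "U \<subseteq> A" "finite A"
  shows "(\<Sum>i\<in>U. c i) = (\<Sum>i\<in>A. c i * incid U i)"
  using assms by (simp add: incid_def sum.inter_restrict[symmetric] Int_absorb1 if_distrib cong: if_cong)

lemma gvc_obj_eq_edge_sum:
  assumes "finite E"
  shows "gvc_obj E c d q0 q1 q2 U1 U2 = (\<Sum>i\<in>U1. c i) + (\<Sum>j\<in>U2. d j)
    + (\<Sum>(i,j)\<in>E. q0 i j * (1 - incid U1 i) * (1 - incid U2 j)
        + q1 i j * (incid U1 i + incid U2 j - 2 * incid U1 i * incid U2 j)
        + q2 i j * incid U1 i * incid U2 j)"
proof -
  have "(\<Sum>(i,j)\<in>E0 E U1 U2. q0 i j) + (\<Sum>(i,j)\<in>E1 E U1 U2. q1 i j)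
      + (\<Sum>(i,j)\<in>E2 E U1 U2. q2 i j)
    = (\<Sum>(i,j)\<in>E. (if i \<notin> U1 \<and> j \<notin> U2 then q0 i j else 0)
        + (if (i \<in> U1) \<noteq> (j \<in> U2) then q1 i j else 0)
        + (if i \<in> U1 \<and> j \<in> U2 then q2 i j else 0))"
    unfolding E0_def E1_def E2_def sum_pairs_filter[OF assms]
    by (simp add: sum.distrib split_def)
  also have "\<dots> = (\<Sum>(i,j)\<in>E. q0 i j * (1 - incid U1 i) * (1 - incid U2 j)
        + q1 i j * (incid U1 i + incid U2 j - 2 * incid U1 i * incid U2 j)
        + q2 i j * incid U1 i * incid U2 j)"
    by (intro sum.cong refl) (auto simp: incid_def)
  finally show ?thesis
    unfolding gvc_obj_def by simp
qed

lemma gvc_obj_eq_bqp_obj: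
  assumes E: "E \<subseteq> {1..m} \<times> {1..n}" and U: "U1 \<subseteq> {1..m}" "U2 \<subseteq> {1..n}"
  shows "gvc_obj E c d q0 q1 q2 U1 U2 =
    bqp_obj m n (\<lambda>i j. if (i,j) \<in> E then q0 i j - 2 * q1 i j + q2 i j else 0)
      (\<lambda>i. c i + (\<Sum>j=1..n. if (i,j) \<in> E then q1 i j - q0 i j else 0))
      (\<lambda>j. d j + (\<Sum>i=1..m. if (i,j) \<in> E then q1 i j - q0 i j else 0))
      (incid U1) (incid U2)
    + (\<Sum>i=1..m. \<Sum>j=1..n. if (i,j) \<in> E then q0 i j else 0)"
proof -
  define x where "x = incid U1"
  define y where "y = incid U2"
  have "finite E"
    using E finite_subset by blast
  have "(\<Sum>(i,j)\<in>E. q0 i j * (1 - x i) * (1 - y j) + q1 i j * (x i + y j - 2 * x i * y j)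
          + q2 i j * x i * y j)
      = (\<Sum>i=1..m. \<Sum>j=1..n. (if (i,j) \<in> E then q0 i j else 0)
          + (if (i,j) \<in> E then q1 i j - q0 i j else 0) * x i
          + (if (i,j) \<in> E then q1 i j - q0 i j else 0) * y j
          + (if (i,j) \<in> E then q0 i j - 2 * q1 i j + q2 i j else 0) * x i * y j)"
    unfolding sum_pairs_eq_double_sum[OF E finite_atLeastAtMost finite_atLeastAtMost]
    by (intro sum.cong refl) (simp add: algebra_simps)
  also have "\<dots> = (\<Sum>i=1..m. \<Sum>j=1..n. if (i,j) \<in> E then q0 i j else 0)
      + (\<Sum>i=1..m. (\<Sum>j=1..n. if (i,j) \<in> E then q1 i j - q0 i j else 0) * x i)
      + (\<Sum>j=1..n. (\<Sum>i=1..m. if (i,j) \<in> E then q1 i j - q0 i j else 0) * y j)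
      + (\<Sum>i=1..m. \<Sum>j=1..n. (if (i,j) \<in> E then q0 i j - 2 * q1 i j + q2 i j else 0) * x i * y j)"
    by (simp add: sum.distrib sum_distrib_right) (rule sum.swap)
  finally show ?thesis
    unfolding gvc_obj_eq_edge_sum[OF \<open>finite E\<close>] bqp_obj_def
      sum_eq_sum_incid[OF U(1) finite_atLeastAtMost] sum_eq_sum_incid[OF U(2) finite_atLeastAtMost]
      x_def[symmetric] y_def[symmetric]
    by (simp add: distrib_right sum.distrib)
qed

lemma bqp_obj_cong:
  assumes "\<And>i j. i \<in> {1..m} \<Longrightarrow> j \<in> {1..n} \<Longrightarrow> Q i j = Q' i j"
    and "\<And>i. i \<in> {1..m} \<Longrightarrow> a i = a' i" "\<And>j. j \<in> {1..n} \<Longrightarrow> b j = b' j"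
    and "\<And>i. i \<in> {1..m} \<Longrightarrow> x i = x' i" "\<And>j. j \<in> {1..n} \<Longrightarrow> y j = y' j"
  shows "bqp_obj m n Q a b x y = bqp_obj m n Q' a' b' x' y'"
  unfolding bqp_obj_def using assms by (auto intro!: sum.cong arg_cong2[where f = "(+)"])

lemma bqp_feas_incid: "bqp_feas m n (incid U1) (incid U2)"
  unfolding bqp_feas_def incid_def by auto

lemma incid_supp01:
  assumes "x i \<in> {0,1}" "i \<in> {1..k}"
  shows "incid (supp01 k x) i = x i"
  using assms unfolding incid_def supp01_def by auto

lemma gvc_formulated_as_bqpI:
  assumes eq: "\<And>U1 U2. U1 \<subseteq> {1..m} \<Longrightarrow> U2 \<subseteq> {1..n} \<Longrightarrow>
    gvc_obj E c d q0 q1 q2 U1 U2 = bqp_obj m n Q a b (incid U1) (incid U2) + K"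
  shows "gvc_formulated_as_bqp m n E c d q0 q1 q2"
  unfolding gvc_formulated_as_bqp_def
proof (intro exI conjI allI impI)
  fix U1 U2
  assume U: "U1 \<subseteq> {1..m}" "U2 \<subseteq> {1..n}"
  then show "gvc_obj E c d q0 q1 q2 U1 U2 = bqp_obj m n Q a b (incid U1) (incid U2) + K"
    by (rule eq)
  assume "bqp_opt m n Q a b (incid U1) (incid U2)"
  then have "bqp_obj m n Q a b (incid U1) (incid U2) \<le> bqp_obj m n Q a b (incid W1) (incid W2)"
    for W1 W2
    using bqp_feas_incid unfolding bqp_opt_def by blast
  then show "gvc_opt m n E c d q0 q1 q2 U1 U2"
    unfolding gvc_opt_def using U eq by simp
qed

lemma bqp_formulated_as_gvcI:
  assumes "bip_graph m n E" and "cls q0 q1 q2"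
    and eq: "\<And>U1 U2. U1 \<subseteq> {1..m} \<Longrightarrow> U2 \<subseteq> {1..n} \<Longrightarrow>
      bqp_obj m n Q a b (incid U1) (incid U2) = gvc_obj E c d q0 q1 q2 U1 U2 + K"
  shows "bqp_formulated_as_gvc cls m n Q a b"
proof -
  have feas_eq: "bqp_obj m n Q a b x y = gvc_obj E c d q0 q1 q2 (supp01 m x) (supp01 n y) + K"
    if "bqp_feas m n x y" for x y
  proof -
    have "bqp_obj m n Q a b x y = bqp_obj m n Q a b (incid (supp01 m x)) (incid (supp01 n y))"
      using that unfolding bqp_feas_def by (intro bqp_obj_cong) (simp_all add: incid_supp01)
    also have "\<dots> = gvc_obj E c d q0 q1 q2 (supp01 m x) (supp01 n y) + K"
      by (rule eq) (auto simp: supp01_def)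
    finally show ?thesis .
  qed
  have "bqp_opt m n Q a b (incid U1) (incid U2)" if opt: "gvc_opt m n E c d q0 q1 q2 U1 U2" for U1 U2
    unfolding bqp_opt_def
  proof (intro conjI allI impI bqp_feas_incid)
    fix x y
    assume "bqp_feas m n x y"
    moreover have "supp01 m x \<subseteq> {1..m}" "supp01 n y \<subseteq> {1..n}"
      unfolding supp01_def by auto
    then have "gvc_obj E c d q0 q1 q2 U1 U2 \<le> gvc_obj E c d q0 q1 q2 (supp01 m x) (supp01 n y)"
      using opt unfolding gvc_opt_def by blast
    moreover have "U1 \<subseteq> {1..m}" "U2 \<subseteq> {1..n}"
      using opt unfolding gvc_opt_def by auto
    ultimately show "bqp_obj m n Q a b (incid U1) (incid U2) \<le> bqp_obj m n Q a b x y"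
      using feas_eq eq by simp
  qed
  then show ?thesis
    unfolding bqp_formulated_as_gvc_def using assms(1,2) feas_eq by blast
qed

lemma bqp_formulated_as_gvc_mono:
  assumes "bqp_formulated_as_gvc cls m n Q a b" and "\<And>q0 q1 q2. cls q0 q1 q2 \<Longrightarrow> cls' q0 q1 q2"
  shows "bqp_formulated_as_gvc cls' m n Q a b"
  using assms unfolding bqp_formulated_as_gvc_def by blast

lemma gvc_formulated_as_bqp:
  assumes "bip_graph m n E"
  shows "gvc_formulated_as_bqp m n E c d q0 q1 q2"
  by (rule gvc_formulated_as_bqpI, rule gvc_obj_eq_bqp_obj) (use assms in \<open>auto simp: bip_graph_def\<close>)

lemma bqp_formulated_as_GVC2: "bqp_formulated_as_gvc cls_GVC2 m n Q a b"
proof (rule bqp_formulated_as_gvcI[where E = "{1..m} \<times> {1..n}" and c = a and d = b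
    and ?q0.0 = "\<lambda>_ _. 0" and ?q1.0 = "\<lambda>_ _. 0" and ?q2.0 = Q and K = 0])
  fix U1 U2
  assume U: "U1 \<subseteq> {1..m}" "U2 \<subseteq> {1..n}"
  show "bqp_obj m n Q a b (incid U1) (incid U2)
      = gvc_obj ({1..m} \<times> {1..n}) a b (\<lambda>_ _. 0) (\<lambda>_ _. 0) Q U1 U2 + 0"
    unfolding gvc_obj_eq_bqp_obj[OF subset_refl U] by simp (rule bqp_obj_cong; simp)
qed (simp_all add: bip_graph_def cls_GVC2_def)


lemma bqp_formulated_as_GVC1: "bqp_formulated_as_gvc cls_GVC1 m n Q a b"
proof (rule bqp_formulated_as_gvcI[where E = "{1..m} \<times> {1..n}"
    and c = "\<lambda>i. a i + (\<Sum>j=1..n. Q i j)" and d = "\<lambda>j. b j + (\<Sum>i=1..m. Q i j)"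
    and ?q0.0 = Q and ?q1.0 = "\<lambda>_ _. 0" and ?q2.0 = "\<lambda>_ _. 0" and K = "- (\<Sum>i=1..m. \<Sum>j=1..n. Q i j)"])
  fix U1 U2
  assume U: "U1 \<subseteq> {1..m}" "U2 \<subseteq> {1..n}"
  show "bqp_obj m n Q a b (incid U1) (incid U2)
      = gvc_obj ({1..m} \<times> {1..n}) (\<lambda>i. a i + (\<Sum>j=1..n. Q i j)) (\<lambda>j. b j + (\<Sum>i=1..m. Q i j))
          Q (\<lambda>_ _. 0) (\<lambda>_ _. 0) U1 U2 + - (\<Sum>i=1..m. \<Sum>j=1..n. Q i j)"
  proof -
    have "(\<Sum>i=1..m. \<Sum>j=1..n. if (i,j) \<in> {1..m} \<times> {1..n} then Q i j else 0)
        = (\<Sum>i=1..m. \<Sum>j=1..n. Q i j)"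
      by (intro sum.cong refl) simp
    then show ?thesis
      unfolding gvc_obj_eq_bqp_obj[OF subset_refl U]
      by simp (rule bqp_obj_cong; simp add: sum_negf)
  qed
qed (simp_all add: bip_graph_def cls_GVC1_def)

theorem theorem4:
  shows "equiv_bqp cls_GVC \<and> equiv_bqp cls_GVC1 \<and> equiv_bqp cls_GVC2"
proof -
  have "bqp_formulated_as_gvc cls_GVC m n Q a b" for m n Q a b
    using bqp_formulated_as_GVC2 by (rule bqp_formulated_as_gvc_mono) (simp add: cls_GVC_def)
  then show ?thesis
    unfolding equiv_bqp_def
    using gvc_formulated_as_bqp bqp_formulated_as_GVC1 bqp_formulated_as_GVC2 by blast
qed

end
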